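(* Let $A$ be a set (the assembly) and let $\mathcal{E}$ be a set of subsets of $A$ (the efficacious coalitions) such that (C1) for every $K\subseteq A$, $K\in\mathcal{E}$ if and only if $A\setminus K\notin\mathcal{E}$; and (C2) if $K\in\mathcal{E}$ and $K\subseteq L\subseteq A$, then $L\in\mathcal{E}$. Suppose each member of $A$ chooses one of the six strict total orders on three candidates $a,b,c$, labelled by $\mathbb{Z}/6\mathbb{Z}$ as follows: $1: a>b>c$, $2: a>c>b$, $3: c>a>b$, $4: c>b>a$, $5: b>c>a$, $6: b>a>c$. For $p\in\mathbb{Z}/6\mathbb{Z}$ let $K(p)$ be the set of members who chose ranking $p$, and write $K(p,q)=K(p)\cup K(q)$. Suppose the following condition (S) holds: there exists $p\in\mathbb{Z}/6\mathbb{Z}$ such that $K(p,p+1)=\emptyset$ or $K(p,p+3)=\emptyset$. Then condition (T) holds: there exists $p\in\mathbb{Z}/6\mathbb{Z}$ such that $K(p,p+1)\in\mathcal{E}$.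
   Context: Indices of $K(\cdot)$ are taken modulo $6$. The sets $K(1),\dots,K(6)$ partition $A$. *)

theory Defs
  imports Main
begin

(* The six rankings are labelled by Z/6Z, represented by residues 0..5 of int
   (label 6 corresponds to residue 0). ch x is the ranking chosen by member x. *)
definition K :: "'m set \<Rightarrow> ('m \<Rightarrow> int) \<Rightarrow> int \<Rightarrow> 'm set" where
  "K A ch p = {x \<in> A. ch x = p mod 6}"

definition K2 :: "'m set \<Rightarrow> ('m \<Rightarrow> int) \<Rightarrow> int \<Rightarrow> int \<Rightarrow> 'm set" where
  "K2 A ch p q = K A ch p \<union> K A ch q"

end

theory Submission
  imports Defs
begin

text \<open>The complement of \<open>K(q, q+1)\<close> is \<open>K(q+2, q+3) \<union> K(q+4, q+5)\<close>. If \<open>K(p, p+1) = {}\<close>,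
  the complement of \<open>K(p+2, p+3)\<close> is therefore \<open>K(p+4, p+5)\<close>; if \<open>K(p, p+3) = {}\<close>, the same
  holds for the complement of \<open>K(p+1, p+2)\<close>. In either case (C1) puts one of two coalitions of
  consecutive rankings into \<open>\<E>\<close>.\<close>

lemma K_add_6: "K A ch (p + 6) = K A ch p"
  unfolding K_def by simp

lemma K2_subset: "K2 A ch p q \<subseteq> A"
  unfolding K2_def K_def by auto

lemma mem_K_iff_offset:
  fixes ch :: "'m \<Rightarrow> int"
  assumes "ch x \<in> {0..5}"
  shows "x \<in> K A ch p \<longleftrightarrow> x \<in> A \<and> (ch x - q) mod 6 = (p - q) mod 6"
proof -
  have "ch x = p mod 6 \<longleftrightarrow> ch x mod 6 = p mod 6"
    using assms by simp
  also have "\<dots> \<longleftrightarrow> (ch x - q) mod 6 = (p - q) mod 6"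
    by (simp add: mod_eq_dvd_iff)
  finally show ?thesis
    unfolding K_def by simp
qed

lemma Diff_K2_consecutive:
  assumes "\<forall>x\<in>A. ch x \<in> {0..5}"
  shows "A - K2 A ch q (q + 1) = K2 A ch (q + 2) (q + 3) \<union> K2 A ch (q + 4) (q + 5)"
proof -
  have "x \<in> A - K2 A ch q (q + 1) \<longleftrightarrow> x \<in> K2 A ch (q + 2) (q + 3) \<union> K2 A ch (q + 4) (q + 5)"
    for x
  proof (cases "x \<in> A")
    case True
    have "0 \<le> (ch x - q) mod 6" "(ch x - q) mod 6 < 6"
      by simp_all
    then show ?thesis
      using True assms unfolding K2_def by (auto simp: mem_K_iff_offset[where q = q])
  qed (simp add: K2_def K_def)
  then show ?thesis
    by blast
qed

theorem mainTheorem1: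
  fixes A :: "'m set" and E :: "'m set set" and ch :: "'m \<Rightarrow> int"
  assumes E_sub: "\<forall>K\<in>E. K \<subseteq> A"
    and C1: "\<forall>K. K \<subseteq> A \<longrightarrow> (K \<in> E \<longleftrightarrow> A - K \<notin> E)"
    and C2: "\<forall>K L. K \<in> E \<and> K \<subseteq> L \<and> L \<subseteq> A \<longrightarrow> L \<in> E"
    and ch_range: "\<forall>x\<in>A. ch x \<in> {0..5}"
    and S: "\<exists>p::int. K2 A ch p (p + 1) = {} \<or> K2 A ch p (p + 3) = {}"
  shows "\<exists>p::int. K2 A ch p (p + 1) \<in> E"
proof -
  obtain p where p: "K2 A ch p (p + 1) = {} \<or> K2 A ch p (p + 3) = {}"
    using S by blast
  have "\<exists>q. A - K2 A ch q (q + 1) = K2 A ch (p + 4) (p + 5)"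
  proof (cases "K2 A ch p (p + 1) = {}")
    case True
    have "A - K2 A ch (p + 2) (p + 2 + 1) = K2 A ch (p + 4) (p + 5) \<union> K2 A ch p (p + 1)"
      using Diff_K2_consecutive[OF ch_range, of "p + 2"] K_add_6[of A ch p] K_add_6[of A ch "p + 1"]
      by (simp add: K2_def ac_simps)
    then show ?thesis
      using True by blast
  next
    case False
    with p have empty: "K2 A ch p (p + 3) = {}"
      by simp
    have "A - K2 A ch (p + 1) (p + 1 + 1) = K2 A ch (p + 4) (p + 5) \<union> K2 A ch p (p + 3)"
      using Diff_K2_consecutive[OF ch_range, of "p + 1"] K_add_6[of A ch p]
      by (auto simp: K2_def ac_simps)
    then show ?thesis
      using empty by blast
  qed
  then obtain q where "A - K2 A ch q (q + 1) = K2 A ch (p + 4) (p + 4 + 1)"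
    by (auto simp: ac_simps)
  then show ?thesis
    using C1 K2_subset by metis
qed

end
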